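(* Suppose $N>n$. Then: (i) $r^{(2)}\ge\frac nN+\sqrt{\frac{n(N-n)}{N^2(N-1)}}$. (ii) If there exists a $2$-uniform $(N,n)$ dual pair for $\mathcal H$, then (a) $r^{(2)}=\frac nN+\sqrt{\frac{n(N-n)}{N^2(N-1)}}$, and (b) an $(N,n)$ dual pair $(F,G)$ belongs to $\mathcal R^{(2)}$ if and only if $(F,G)$ is $2$-uniform.
   Context: $\mathcal H$ is a complex Hilbert space of finite dimension $n$, inner product linear in the first argument. A finite sequence $F=\{f_i\}_{i=1}^N$ is a frame if there are $0<A\le B$ with $A\|f\|^2\le\sum_i|\langle f,f_i\rangle|^2\le B\|f\|^2$ for all $f$. $G=\{g_i\}_{i=1}^N$ is a dual of $F$ if $f=\sum_i\langle f,g_i\rangle f_i$ for all $f$; $(F,G)$ is then an $(N,n)$ dual pair. A dual pair is $1$-uniform if $\langle f_i,g_i\rangle$ is independent of $i$, and $2$-uniform if it is $1$-uniform and $\langle f_i,g_j\rangle\langle f_j,g_i\rangle$ is the same constant for all $i\ne j$. $\mathcal A_m$ is the set of $m$-element subsets of $\{1,\dots,N\}$; $E_{\Lambda,F,G}f=\sum_{i\in\Lambda}\langle f,f_i\rangle g_i$; $\rho$ is spectral radius; $r^{(m)}_{F,G}=\max_{\Lambda\in\mathcal A_m}\rho(E_{\Lambda,F,G})$; $r^{(1)}=\inf\{r^{(1)}_{F,G}:(F,G)\text{ an }(N,n)\text{ dual pair}\}$; $\mathcal R^{(1)}=\{(F,G):r^{(1)}_{F,G}=r^{(1)}\}$; $r^{(2)}=\inf\{r^{(2)}_{F,G}:(F,G)\in\mathcal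 R^{(1)}\}$; $\mathcal R^{(2)}=\{(F,G)\in\mathcal R^{(1)}:r^{(2)}_{F,G}=r^{(2)}\}$. *)

theory Defs
  imports Complex_Main "Jordan_Normal_Form.Spectral_Radius"
begin

text \<open>The n-dimensional complex Hilbert space is modelled as complex column vectors of
  length n (carrier_vec n) with inner product  inner f g = f \<bullet>c g = sum_k f_k * cnj (g_k),
  linear in the first argument. Finite sequences {f_i}, i = 1..N, are functions
  F :: nat => complex vec, indexed by i in {0..<N}.\<close>

definition hinner :: "complex vec \<Rightarrow> complex vec \<Rightarrow> complex" where
  "hinner f g = f \<bullet>c g"

definition hnorm2 :: "complex vec \<Rightarrow> real" where
  "hnorm2 f = Re (hinner f f)"

definition is_frame :: "nat \<Rightarrow> nat \<Rightarrow> (nat \<Rightarrow> complex vec) \<Rightarrow> bool" where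
  "is_frame N n F \<longleftrightarrow> (\<forall>i<N. F i \<in> carrier_vec n) \<and>
     (\<exists>A B. 0 < A \<and> A \<le> B \<and>
        (\<forall>f \<in> carrier_vec n.
            A * hnorm2 f \<le> (\<Sum>i<N. (cmod (hinner f (F i)))\<^sup>2) \<and>
            (\<Sum>i<N. (cmod (hinner f (F i)))\<^sup>2) \<le> B * hnorm2 f))"

definition is_dual :: "nat \<Rightarrow> nat \<Rightarrow> (nat \<Rightarrow> complex vec) \<Rightarrow> (nat \<Rightarrow> complex vec) \<Rightarrow> bool" where
  "is_dual N n F G \<longleftrightarrow> (\<forall>i<N. G i \<in> carrier_vec n) \<and>
     (\<forall>f \<in> carrier_vec n. f = vec n (\<lambda>k. \<Sum>i<N. hinner f (G i) * (F i $ k)))"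

definition dual_pair :: "nat \<Rightarrow> nat \<Rightarrow> (nat \<Rightarrow> complex vec) \<Rightarrow> (nat \<Rightarrow> complex vec) \<Rightarrow> bool" where
  "dual_pair N n F G \<longleftrightarrow> is_frame N n F \<and> is_dual N n F G"

definition uniform1 :: "nat \<Rightarrow> (nat \<Rightarrow> complex vec) \<Rightarrow> (nat \<Rightarrow> complex vec) \<Rightarrow> bool" where
  "uniform1 N F G \<longleftrightarrow> (\<exists>c. \<forall>i<N. hinner (F i) (G i) = c)"

definition uniform2 :: "nat \<Rightarrow> (nat \<Rightarrow> complex vec) \<Rightarrow> (nat \<Rightarrow> complex vec) \<Rightarrow> bool" where
  "uniform2 N F G \<longleftrightarrow> uniform1 N F G \<and>
     (\<exists>d. \<forall>i<N. \<forall>j<N. i \<noteq> j \<longrightarrow> hinner (F i) (G j) * hinner (F j) (G i) = d)"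

text \<open>Matrix of E_{Lambda,F,G} f = sum_{i in Lambda} <f, f_i> g_i
  (its (j,k) entry is sum_{i in Lambda} (g_i)_j * cnj ((f_i)_k)).\<close>
definition E_op :: "nat \<Rightarrow> nat set \<Rightarrow> (nat \<Rightarrow> complex vec) \<Rightarrow> (nat \<Rightarrow> complex vec) \<Rightarrow> complex mat" where
  "E_op n \<Lambda> F G = mat n n (\<lambda>(j,k). \<Sum>i\<in>\<Lambda>. (G i $ j) * cnj (F i $ k))"

definition subsets_m :: "nat \<Rightarrow> nat \<Rightarrow> nat set set" where
  "subsets_m N m = {\<Lambda>. \<Lambda> \<subseteq> {0..<N} \<and> card \<Lambda> = m}"

definition r_FG :: "nat \<Rightarrow> nat \<Rightarrow> nat \<Rightarrow> (nat \<Rightarrow> complex vec) \<Rightarrow> (nat \<Rightarrow> complex vec) \<Rightarrow> real" where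
  "r_FG N n m F G = Max ((\<lambda>\<Lambda>. spectral_radius (E_op n \<Lambda> F G)) ` subsets_m N m)"

definition r1 :: "nat \<Rightarrow> nat \<Rightarrow> real" where
  "r1 N n = Inf {r_FG N n 1 F G | F G. dual_pair N n F G}"

definition R1 :: "nat \<Rightarrow> nat \<Rightarrow> ((nat \<Rightarrow> complex vec) \<times> (nat \<Rightarrow> complex vec)) set" where
  "R1 N n = {(F, G). dual_pair N n F G \<and> r_FG N n 1 F G = r1 N n}"

definition r2 :: "nat \<Rightarrow> nat \<Rightarrow> real" where
  "r2 N n = Inf {r_FG N n 2 F G | F G. (F, G) \<in> R1 N n}"

definition R2 :: "nat \<Rightarrow> nat \<Rightarrow> ((nat \<Rightarrow> complex vec) \<times> (nat \<Rightarrow> complex vec)) set" where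
  "R2 N n = {(F, G). (F, G) \<in> R1 N n \<and> r_FG N n 2 F G = r2 N n}"

end

theory Submission
  imports Defs
begin

text \<open>Every dual pair satisfies \<open>\<Sum>_i \<langle>f_i, g_i\<rangle> = n\<close> (the trace of the identity) and
  \<open>\<langle>f_i, g_i\<rangle> = \<Sum>_j \<langle>f_i, g_j\<rangle> \<langle>f_j, g_i\<rangle>\<close>. The first identity gives \<open>r^(1) = n/N\<close>, attained
  exactly when all \<open>\<langle>f_i, g_i\<rangle> = n/N\<close> (for instance by the harmonic frame). For such pairs the
  second identity makes the products \<open>w_ij = \<langle>f_i, g_j\<rangle> \<langle>f_j, g_i\<rangle>\<close>, \<open>i \<noteq> j\<close>, average to
  \<open>a = n (N - n) / (N\<^sup>2 (N - 1))\<close>. On \<open>\<Lambda> = {i, j}\<close> the nonzero eigenvalues of \<open>E\<^sub>\<Lambda>\<close> are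
  \<open>n/N \<plusminus> \<surd>(conj w_ij)\<close>, so \<open>\<rho>(E\<^sub>\<Lambda>) \<ge> n/N + \<surd>(Re w_ij)\<close>, and some pair has \<open>Re w_ij \<ge> a\<close>.
  If \<open>r^(2)_(F,G) = n/N + \<surd>a\<close>, then \<open>Re w_ij \<le> a\<close> for every pair, so all \<open>w_ij = a\<close>: the pair
  is 2-uniform. Conversely \<open>w_ij = a\<close> bounds every \<open>\<rho>(E\<^sub>\<Lambda>)\<close> by \<open>n/N + \<surd>a\<close>.\<close>

lemma hinner_eq_sum:
  assumes "g \<in> carrier_vec n"
  shows "hinner f g = (\<Sum>k<n. f $ k * cnj (g $ k))"
  using assms unfolding hinner_def scalar_prod_def
  by (auto intro!: sum.cong simp: atLeast0LessThan)

lemma hinner_commute_cnj: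
  assumes "f \<in> carrier_vec n" "g \<in> carrier_vec n"
  shows "hinner f g = cnj (hinner g f)"
  using assms by (simp add: hinner_eq_sum[of _ n] mult.commute)

lemma hinner_lincomb_left:
  assumes "g \<in> carrier_vec n" "\<And>i. i \<in> I \<Longrightarrow> G i \<in> carrier_vec n"
  shows "hinner (vec n (\<lambda>k. \<Sum>i\<in>I. a i * G i $ k)) g = (\<Sum>i\<in>I. a i * hinner (G i) g)"
proof -
  have "hinner (vec n (\<lambda>k. \<Sum>i\<in>I. a i * G i $ k)) g = (\<Sum>k<n. (\<Sum>i\<in>I. a i * G i $ k) * cnj (g $ k))"
    using assms by (simp add: hinner_eq_sum[of _ n])
  also have "\<dots> = (\<Sum>i\<in>I. a i * (\<Sum>k<n. G i $ k * cnj (g $ k)))"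
    by (simp add: sum_distrib_left sum_distrib_right sum.swap[of _ I] mult_ac)
  also have "\<dots> = (\<Sum>i\<in>I. a i * hinner (G i) g)"
    using assms by (auto intro!: sum.cong simp: hinner_eq_sum[of _ n])
  finally show ?thesis .
qed

lemma complex_eq_of_real_if_Re_eq_cmod_le:
  assumes "Re z = r" "cmod z \<le> r"
  shows "z = complex_of_real r"
proof -
  have "(Re z)\<^sup>2 + (Im z)\<^sup>2 \<le> r\<^sup>2"
    using assms power_mono[OF assms(2) norm_ge_zero, of 2] by (simp add: cmod_power2)
  hence "(Im z)\<^sup>2 \<le> 0" using assms(1) by simp
  hence "Im z = 0" by simp
  thus ?thesis using assms(1) by (simp add: complex_eq_iff)
qed

lemma exists_ge_if_sum_ge:
  fixes f :: "'a \<Rightarrow> real"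
  assumes "finite A" "A \<noteq> {}" "of_nat (card A) * c \<le> sum f A"
  shows "\<exists>x\<in>A. c \<le> f x"
proof (rule ccontr)
  assume "\<not> ?thesis"
  hence "sum f A < sum (\<lambda>_. c) A" using assms(1,2) by (intro sum_strict_mono) auto
  thus False using assms(3) by simp
qed

lemma eq_bound_if_sum_eq:
  fixes f :: "'a \<Rightarrow> real"
  assumes "finite A" "\<And>x. x \<in> A \<Longrightarrow> f x \<le> c" "sum f A = of_nat (card A) * c" "x \<in> A"
  shows "f x = c"
proof -
  have nonneg: "\<And>y. y \<in> A \<Longrightarrow> 0 \<le> c - f y" using assms(2) by simp
  have "(\<Sum>y\<in>A. c - f y) = 0" using assms(3) by (simp add: sum_subtractf)
  hence "\<forall>y\<in>A. c - f y = 0" using sum_nonneg_eq_0_iff[OF assms(1) nonneg] by simp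
  thus ?thesis using assms(4) by simp
qed

lemma E_op_carrier [simp]: "E_op n \<Lambda> F G \<in> carrier_mat n n"
  by (simp add: E_op_def)

lemma E_op_mult_vec:
  assumes "v \<in> carrier_vec n" "\<And>i. i \<in> \<Lambda> \<Longrightarrow> F i \<in> carrier_vec n" "finite \<Lambda>"
  shows "E_op n \<Lambda> F G *\<^sub>v v = vec n (\<lambda>j. \<Sum>i\<in>\<Lambda>. hinner v (F i) * G i $ j)"
proof (rule eq_vecI)
  fix j assume "j < dim_vec (vec n (\<lambda>j. \<Sum>i\<in>\<Lambda>. hinner v (F i) * G i $ j))"
  hence j: "j < n" by simp
  have "(E_op n \<Lambda> F G *\<^sub>v v) $ j = (\<Sum>k<n. (\<Sum>i\<in>\<Lambda>. G i $ j * cnj (F i $ k)) * v $ k)"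
    using j assms(1) unfolding E_op_def mult_mat_vec_def scalar_prod_def
    by (auto intro!: sum.cong simp: atLeast0LessThan)
  also have "\<dots> = (\<Sum>i\<in>\<Lambda>. (\<Sum>k<n. v $ k * cnj (F i $ k)) * G i $ j)"
    by (simp add: sum_distrib_left sum_distrib_right sum.swap[of _ \<Lambda>] mult_ac)
  also have "\<dots> = (\<Sum>i\<in>\<Lambda>. hinner v (F i) * G i $ j)"
    using assms(2) by (auto intro!: sum.cong simp: hinner_eq_sum[of _ n])
  finally show "(E_op n \<Lambda> F G *\<^sub>v v) $ j = vec n (\<lambda>j. \<Sum>i\<in>\<Lambda>. hinner v (F i) * G i $ j) $ j"
    using j by simp
qed (simp add: E_op_def)

text \<open>The nonzero eigenvalues of \<open>E_op n \<Lambda> F G\<close> are those of the \<open>\<Lambda> \<times> \<Lambda>\<close> matrix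
  \<open>(\<langle>g_i, f_l\<rangle>)\<close>: an eigenvector \<open>v\<close> yields the coefficients \<open>\<langle>v, f_l\<rangle>\<close>, and
  coefficients \<open>a\<close> yield the eigenvector \<open>\<Sum>_i a_i g_i\<close>.\<close>

lemma E_op_eigenvector_coeffs:
  assumes ev: "eigenvector (E_op n \<Lambda> F G) v lam"
    and FC: "\<And>i. i \<in> \<Lambda> \<Longrightarrow> F i \<in> carrier_vec n" and GC: "\<And>i. i \<in> \<Lambda> \<Longrightarrow> G i \<in> carrier_vec n"
    and fin: "finite \<Lambda>"
  shows "\<And>l. F l \<in> carrier_vec n \<Longrightarrow> lam * hinner v (F l) = (\<Sum>i\<in>\<Lambda>. hinner v (F i) * hinner (G i) (F l))"
    and "lam \<noteq> 0 \<Longrightarrow> \<exists>i\<in>\<Lambda>. hinner v (F i) \<noteq> 0"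
proof -
  have v: "v \<in> carrier_vec n" and v0: "v \<noteq> 0\<^sub>v n" and Ev: "E_op n \<Lambda> F G *\<^sub>v v = lam \<cdot>\<^sub>v v"
    using ev unfolding eigenvector_def by (auto simp: E_op_def)
  have eq: "lam \<cdot>\<^sub>v v = vec n (\<lambda>k. \<Sum>i\<in>\<Lambda>. hinner v (F i) * G i $ k)"
    using Ev E_op_mult_vec[OF v FC fin] by simp
  show "lam * hinner v (F l) = (\<Sum>i\<in>\<Lambda>. hinner v (F i) * hinner (G i) (F l))"
    if Fl: "F l \<in> carrier_vec n" for l
  proof -
    have "lam * hinner v (F l) = hinner (lam \<cdot>\<^sub>v v) (F l)"
      using v Fl by (simp add: hinner_eq_sum[of _ n] sum_distrib_left mult_ac)
    also have "\<dots> = (\<Sum>i\<in>\<Lambda>. hinner v (F i) * hinner (G i) (F l))"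
      unfolding eq by (rule hinner_lincomb_left[OF Fl GC])
    finally show ?thesis .
  qed
  assume l0: "lam \<noteq> 0"
  show "\<exists>i\<in>\<Lambda>. hinner v (F i) \<noteq> 0"
  proof (rule ccontr)
    assume "\<not> ?thesis"
    hence "lam \<cdot>\<^sub>v v = 0\<^sub>v n" unfolding eq by (auto intro!: eq_vecI)
    have "v = 0\<^sub>v n"
    proof (rule eq_vecI)
      fix k assume k: "k < dim_vec (0\<^sub>v n :: complex vec)"
      hence "(lam \<cdot>\<^sub>v v) $ k = 0" using \<open>lam \<cdot>\<^sub>v v = 0\<^sub>v n\<close> by simp
      thus "v $ k = 0\<^sub>v n $ k" using k v l0 by simp
    qed (use v in simp)
    thus False using v0 by simp
  qed
qed

lemma E_op_spectrumI:
  assumes FC: "\<And>i. i \<in> \<Lambda> \<Longrightarrow> F i \<in> carrier_vec n" and GC: "\<And>i. i \<in> \<Lambda> \<Longrightarrow> G i \<in> carrier_vec n"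
    and fin: "finite \<Lambda>" and l0: "lam \<noteq> 0"
    and eqs: "\<And>l. l \<in> \<Lambda> \<Longrightarrow> (\<Sum>i\<in>\<Lambda>. a i * hinner (G i) (F l)) = lam * a l"
    and nz: "m \<in> \<Lambda>" "a m \<noteq> 0"
  shows "lam \<in> spectrum (E_op n \<Lambda> F G)"
proof -
  define v where "v = vec n (\<lambda>k. \<Sum>i\<in>\<Lambda>. a i * G i $ k)"
  have v: "v \<in> carrier_vec n" unfolding v_def by simp
  have hv: "hinner v (F l) = lam * a l" if "l \<in> \<Lambda>" for l
    unfolding v_def using hinner_lincomb_left[OF FC[OF that], of \<Lambda> G a] GC eqs[OF that] by simp
  have "E_op n \<Lambda> F G *\<^sub>v v = vec n (\<lambda>k. \<Sum>i\<in>\<Lambda>. hinner v (F i) * G i $ k)"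
    by (rule E_op_mult_vec[OF v FC fin])
  also have "\<dots> = lam \<cdot>\<^sub>v v"
    unfolding v_def by (rule eq_vecI) (auto simp: hv[unfolded v_def] sum_distrib_left mult_ac intro!: sum.cong)
  finally have Ev: "E_op n \<Lambda> F G *\<^sub>v v = lam \<cdot>\<^sub>v v" .
  have "v \<noteq> 0\<^sub>v n"
  proof
    assume "v = 0\<^sub>v n"
    hence "hinner v (F m) = 0" using FC[OF nz(1)] by (simp add: hinner_eq_sum[of _ n])
    thus False using hv[OF nz(1)] l0 nz(2) by simp
  qed
  thus ?thesis using v Ev unfolding spectrum_def eigenvalue_def eigenvector_def
    by (auto simp: E_op_def)
qed

lemma spectral_radius_E_op_nonneg: "0 < n \<Longrightarrow> 0 \<le> spectral_radius (E_op n \<Lambda> F G)"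
  using spectral_radius_mem_max(1)[OF E_op_carrier] by (metis imageE norm_ge_zero)

lemma spectral_radius_E_op_singleton:
  assumes "F i \<in> carrier_vec n" "G i \<in> carrier_vec n" "0 < n"
  shows "spectral_radius (E_op n {i} F G) = cmod (hinner (F i) (G i))"
proof (rule antisym)
  have cj: "hinner (G i) (F i) = cnj (hinner (F i) (G i))"
    using hinner_commute_cnj assms(1,2) by blast
  obtain lam where lam: "lam \<in> spectrum (E_op n {i} F G)"
    and sr: "spectral_radius (E_op n {i} F G) = cmod lam"
    using spectral_radius_mem_max(1)[OF E_op_carrier assms(3), of "{i}" F G] by auto
  then obtain v where ev: "eigenvector (E_op n {i} F G) v lam"
    unfolding spectrum_def eigenvalue_def by auto
  show "spectral_radius (E_op n {i} F G) \<le> cmod (hinner (F i) (G i))"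
  proof (cases "lam = 0")
    case False
    have "lam * hinner v (F i) = hinner v (F i) * hinner (G i) (F i)"
      using E_op_eigenvector_coeffs(1)[OF ev, of i] assms by auto
    moreover have "hinner v (F i) \<noteq> 0"
      using E_op_eigenvector_coeffs(2)[OF ev _ _ _ False] assms by auto
    ultimately have "lam = hinner (G i) (F i)" by (simp add: mult.commute)
    thus ?thesis using sr cj by simp
  qed (use sr in simp)
  show "cmod (hinner (F i) (G i)) \<le> spectral_radius (E_op n {i} F G)"
  proof (cases "hinner (F i) (G i) = 0")
    case True
    thus ?thesis using spectral_radius_E_op_nonneg[OF assms(3)] by simp
  next
    case False
    have "hinner (G i) (F i) \<in> spectrum (E_op n {i} F G)"
      by (rule E_op_spectrumI[where a="\<lambda>_. 1" and m=i]) (use assms False cj in auto)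
    thus ?thesis using spectral_radius_mem_max(2)[OF E_op_carrier assms(3)] cj by force
  qed
qed

lemma dual_pairD:
  assumes "dual_pair N n F G"
  shows "\<And>i. i < N \<Longrightarrow> F i \<in> carrier_vec n" "\<And>i. i < N \<Longrightarrow> G i \<in> carrier_vec n"
    "\<And>f. f \<in> carrier_vec n \<Longrightarrow> f = vec n (\<lambda>k. \<Sum>i<N. hinner f (G i) * (F i $ k))"
  using assms unfolding dual_pair_def is_frame_def is_dual_def by auto

lemma dual_pair_trace:
  assumes "dual_pair N n F G"
  shows "(\<Sum>i<N. hinner (F i) (G i)) = of_nat n"
proof -
  note D = dual_pairD[OF assms]
  have one: "(\<Sum>i<N. F i $ k * cnj (G i $ k)) = 1" if k: "k < n" for k
  proof -
    have hu: "hinner (unit_vec n k) (G i) = cnj (G i $ k)" if "i < N" for i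
    proof -
      have "hinner (unit_vec n k) (G i) = (\<Sum>m<n. if m = k then cnj (G i $ m) else 0)"
        using k unfolding hinner_eq_sum[OF D(2)[OF that]] by (intro sum.cong) (auto simp: unit_vec_def)
      thus ?thesis using k by simp
    qed
    have "unit_vec n k $ k = vec n (\<lambda>m. \<Sum>i<N. hinner (unit_vec n k) (G i) * (F i $ m)) $ k"
      using D(3)[of "unit_vec n k"] by simp
    thus ?thesis using k hu by (simp add: mult.commute)
  qed
  have "(\<Sum>i<N. hinner (F i) (G i)) = (\<Sum>i<N. \<Sum>k<n. F i $ k * cnj (G i $ k))"
    using D(2) by (auto intro!: sum.cong simp: hinner_eq_sum[of _ n])
  also have "\<dots> = (\<Sum>k<n. \<Sum>i<N. F i $ k * cnj (G i $ k))" by (rule sum.swap)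
  also have "\<dots> = of_nat n" using one by simp
  finally show ?thesis .
qed

lemma dual_pair_diag_expansion:
  assumes "dual_pair N n F G" "i < N"
  shows "hinner (F i) (G i) = (\<Sum>j<N. hinner (F i) (G j) * hinner (F j) (G i))"
proof -
  note D = dual_pairD[OF assms(1)]
  have "hinner (F i) (G i) = hinner (vec n (\<lambda>k. \<Sum>j<N. hinner (F i) (G j) * (F j $ k))) (G i)"
    using D(3)[OF D(1)[OF assms(2)]] by simp
  also have "\<dots> = (\<Sum>j<N. hinner (F i) (G j) * hinner (F j) (G i))"
    by (rule hinner_lincomb_left) (use D assms(2) in auto)
  finally show ?thesis .
qed

lemma subsets_m_1: "subsets_m N 1 = (\<lambda>i. {i}) ` {..<N}"
  unfolding subsets_m_def by (auto simp: card_1_singleton_iff)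

lemma r_FG_1_eq_Max:
  assumes "dual_pair N n F G" "0 < n"
  shows "r_FG N n 1 F G = Max ((\<lambda>i. cmod (hinner (F i) (G i))) ` {..<N})"
  unfolding r_FG_def subsets_m_1 image_image
  using spectral_radius_E_op_singleton dual_pairD(1,2)[OF assms(1)] assms(2)
  by (intro arg_cong[where f=Max] image_cong) auto

lemma r_FG_1_ge:
  assumes "dual_pair N n F G" "0 < n" "n < N"
  shows "real n / real N \<le> r_FG N n 1 F G"
proof -
  have "of_nat (card {..<N}) * (real n / real N) \<le> (\<Sum>i<N. Re (hinner (F i) (G i)))"
    using arg_cong[OF dual_pair_trace[OF assms(1)], of Re] assms(3) by (simp add: Re_sum)
  then obtain i where i: "i < N" "real n / real N \<le> Re (hinner (F i) (G i))"
    using exists_ge_if_sum_ge[of "{..<N}"] assms(3) by fastforce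
  have "Re (hinner (F i) (G i)) \<le> cmod (hinner (F i) (G i))" by (rule complex_Re_le_cmod)
  also have "\<dots> \<le> r_FG N n 1 F G"
    unfolding r_FG_1_eq_Max[OF assms(1,2)] by (rule Max_ge) (use i in auto)
  finally show ?thesis using i by simp
qed

lemma r_FG_1_eq_iff:
  assumes "dual_pair N n F G" "0 < n" "n < N"
  shows "r_FG N n 1 F G = real n / real N \<longleftrightarrow> (\<forall>i<N. hinner (F i) (G i) = of_nat n / of_nat N)"
proof
  assume r: "r_FG N n 1 F G = real n / real N"
  have le: "cmod (hinner (F i) (G i)) \<le> real n / real N" if "i < N" for i
    unfolding r[symmetric] r_FG_1_eq_Max[OF assms(1,2)] by (rule Max_ge) (use that in auto)
  have "(\<Sum>i<N. Re (hinner (F i) (G i))) = of_nat (card {..<N}) * (real n / real N)"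
    using arg_cong[OF dual_pair_trace[OF assms(1)], of Re] assms(3) by (simp add: Re_sum)
  hence "Re (hinner (F i) (G i)) = real n / real N" if "i < N" for i
    using eq_bound_if_sum_eq[of "{..<N}" "\<lambda>i. Re (hinner (F i) (G i))"] le that
    by (meson complex_Re_le_cmod finite_lessThan lessThan_iff order_trans)
  hence "hinner (F i) (G i) = complex_of_real (real n / real N)" if "i < N" for i
    using complex_eq_of_real_if_Re_eq_cmod_le le that by blast
  thus "\<forall>i<N. hinner (F i) (G i) = of_nat n / of_nat N" by simp
next
  assume "\<forall>i<N. hinner (F i) (G i) = of_nat n / of_nat N"
  hence "(\<lambda>i. cmod (hinner (F i) (G i))) ` {..<N} = {real n / real N}"
    using assms(3) by (auto simp: norm_divide intro!: image_eqI[of _ _ 0])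
  thus "r_FG N n 1 F G = real n / real N" unfolding r_FG_1_eq_Max[OF assms(1,2)] by simp
qed

lemma uniform1_dual_pair_diag:
  assumes "dual_pair N n F G" "uniform1 N F G" "i < N"
  shows "hinner (F i) (G i) = of_nat n / of_nat N"
proof -
  obtain c where c: "\<And>i. i < N \<Longrightarrow> hinner (F i) (G i) = c"
    using assms(2) unfolding uniform1_def by auto
  have "of_nat N * c = of_nat n" using dual_pair_trace[OF assms(1)] c by simp
  thus ?thesis using c assms(3) by (simp add: field_simps)
qed

lemma sum_cis_multiples_eq_0:
  fixes d :: int
  assumes "d \<noteq> 0" "\<bar>d\<bar> < int N"
  shows "(\<Sum>i<N. cis (2 * pi * real i * of_int d / real N)) = 0"
proof -
  have N: "N > 0" using assms by auto
  define z where "z = cis (2 * pi * of_int d / real N)"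
  have zi: "cis (2 * pi * real i * of_int d / real N) = z ^ i" for i
    unfolding z_def DeMoivre by (simp add: mult_ac)
  have "real N * (2 * pi * of_int d / real N) = 2 * pi * of_int d" using N by simp
  hence zN: "z ^ N = 1" unfolding z_def DeMoivre by (simp add: cis_multiple_2pi[of "of_int d"])
  have "z \<noteq> 1"
  proof
    assume "z = 1"
    hence "cos (2 * pi * of_int d / real N) = 1" unfolding z_def
      by (metis Re_complex_of_real cis.sel(1) one_complex.sel(1))
    then obtain m :: int where "2 * pi * of_int d / real N = of_int m * 2 * pi"
      using cos_one_2pi_int by blast
    hence "of_int d = of_int m * real N" using N by (simp add: field_simps)
    hence dm: "d = m * int N" by (metis of_int_eq_iff of_int_mult of_int_of_nat_eq)
    hence "m \<noteq> 0" using assms(1) by auto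
    hence "1 * int N \<le> \<bar>m\<bar> * int N" by (intro mult_right_mono) auto
    thus False using assms(2) unfolding dm by (simp add: abs_mult)
  qed
  thus ?thesis unfolding zi using geometric_sum[of z N] zN by simp
qed

lemma sum_cis_orthogonal:
  assumes "k < N" "l < N"
  shows "(\<Sum>i<N. cis (2 * pi * real i * real k / real N) * cnj (cis (2 * pi * real i * real l / real N)))
     = (if k = l then of_nat N else 0)"
proof -
  have eq: "cis (2 * pi * real i * real k / real N) * cnj (cis (2 * pi * real i * real l / real N))
    = cis (2 * pi * real i * of_int (int k - int l) / real N)" for i
    by (simp add: cis_cnj cis_mult) (simp add: diff_divide_distrib[symmetric] algebra_simps)
  show ?thesis
    unfolding eq using sum_cis_multiples_eq_0[of "int k - int l" N] assms by auto
qed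

text \<open>The harmonic frame \<open>f_i = (\<omega>^(i k))_(k<n)\<close>, \<open>\<omega> = exp (2 \<pi> \<i> / N)\<close>, is tight with
  bound \<open>N\<close>, so \<open>g_i = f_i / N\<close> is a dual, and \<open>\<langle>f_i, g_i\<rangle> = n/N\<close> for all \<open>i\<close>.\<close>

definition harmonic_frame :: "nat \<Rightarrow> nat \<Rightarrow> nat \<Rightarrow> complex vec" where
  "harmonic_frame N n i = vec n (\<lambda>k. cis (2 * pi * real i * real k / real N))"

definition harmonic_dual :: "nat \<Rightarrow> nat \<Rightarrow> nat \<Rightarrow> complex vec" where
  "harmonic_dual N n i = vec n (\<lambda>k. cis (2 * pi * real i * real k / real N) / of_nat N)"

lemma harmonic_carrier [simp]:
  "harmonic_frame N n i \<in> carrier_vec n" "harmonic_dual N n i \<in> carrier_vec n"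
  by (auto simp: harmonic_frame_def harmonic_dual_def)

lemma harmonic_is_dual:
  assumes "n \<le> N"
  shows "is_dual N n (harmonic_frame N n) (harmonic_dual N n)"
  unfolding is_dual_def
proof (intro conjI ballI allI impI)
  fix f :: "complex vec" assume f: "f \<in> carrier_vec n"
  let ?c = "\<lambda>i k. cis (2 * pi * real i * real k / real N)"
  show "f = vec n (\<lambda>k. \<Sum>i<N. hinner f (harmonic_dual N n i) * (harmonic_frame N n i $ k))"
  proof (rule eq_vecI)
    fix k assume "k < dim_vec (vec n (\<lambda>k. \<Sum>i<N. hinner f (harmonic_dual N n i) * (harmonic_frame N n i $ k)))"
    hence k: "k < n" by simp
    have "(\<Sum>i<N. hinner f (harmonic_dual N n i) * (harmonic_frame N n i $ k))
       = (\<Sum>i<N. (\<Sum>l<n. f $ l * (cnj (?c i l) / of_nat N)) * ?c i k)"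
      using k by (simp add: hinner_eq_sum[of _ n] harmonic_frame_def harmonic_dual_def)
    also have "\<dots> = (\<Sum>l<n. f $ l / of_nat N * (\<Sum>i<N. ?c i k * cnj (?c i l)))"
      by (simp add: sum_distrib_left sum_distrib_right sum.swap[of _ "{..<N}"] mult_ac)
    also have "\<dots> = (\<Sum>l<n. if l = k then f $ k else 0)"
      using k assms by (intro sum.cong) (auto simp: sum_cis_orthogonal)
    also have "\<dots> = f $ k" using k by simp
    finally show "f $ k = vec n (\<lambda>k. \<Sum>i<N. hinner f (harmonic_dual N n i) * (harmonic_frame N n i $ k)) $ k"
      using k by simp
  qed (use f in simp)
qed simp

lemma harmonic_dual_pair:
  assumes "n \<le> N" "0 < N"
  shows "dual_pair N n (harmonic_frame N n) (harmonic_dual N n)"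
  unfolding dual_pair_def
proof
  let ?F = "harmonic_frame N n" and ?G = "harmonic_dual N n"
  show dual: "is_dual N n ?F ?G" by (rule harmonic_is_dual[OF assms(1)])
  have tight: "(\<Sum>i<N. (cmod (hinner f (?F i)))\<^sup>2) = real N * hnorm2 f" if f: "f \<in> carrier_vec n" for f
  proof -
    have FG: "hinner f (?F i) = of_nat N * hinner f (?G i)" for i
      using assms by (simp add: hinner_eq_sum[of _ n] harmonic_frame_def harmonic_dual_def sum_distrib_left)
    have "complex_of_real (\<Sum>i<N. (cmod (hinner f (?F i)))\<^sup>2) = (\<Sum>i<N. hinner f (?F i) * cnj (hinner f (?F i)))"
      unfolding of_real_sum by (intro sum.cong refl) (rule complex_norm_square)
    also have "\<dots> = of_nat N * (\<Sum>i<N. hinner f (?G i) * hinner (?F i) f)"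
      using f by (simp add: FG sum_distrib_left mult_ac hinner_commute_cnj[of "?F _" n f])
    also have "(\<Sum>i<N. hinner f (?G i) * hinner (?F i) f) = hinner (vec n (\<lambda>k. \<Sum>i<N. hinner f (?G i) * (?F i $ k))) f"
      by (rule hinner_lincomb_left[symmetric]) (use f in auto)
    also have "vec n (\<lambda>k. \<Sum>i<N. hinner f (?G i) * (?F i $ k)) = f"
      using dual f unfolding is_dual_def by auto
    finally have "complex_of_real (\<Sum>i<N. (cmod (hinner f (?F i)))\<^sup>2) = of_nat N * hinner f f" .
    hence "Re (complex_of_real (\<Sum>i<N. (cmod (hinner f (?F i)))\<^sup>2)) = Re (of_nat N * hinner f f)"
      by (rule arg_cong)
    thus ?thesis by (simp add: hnorm2_def)
  qed
  show "is_frame N n ?F"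
    unfolding is_frame_def using assms tight by (intro conjI exI[of _ "real N"]) auto
qed

lemma harmonic_diag: "hinner (harmonic_frame N n i) (harmonic_dual N n i) = of_nat n / of_nat N"
proof -
  have "hinner (harmonic_frame N n i) (harmonic_dual N n i) = (\<Sum>k<n. 1 / of_nat N)"
    by (simp add: hinner_eq_sum[of _ n] harmonic_frame_def harmonic_dual_def cis_cnj cis_mult)
  thus ?thesis by simp
qed

lemma r1_eq:
  assumes "0 < n" "n < N"
  shows "r1 N n = real n / real N"
  unfolding r1_def
proof (rule cInf_eq_minimum)
  have "dual_pair N n (harmonic_frame N n) (harmonic_dual N n)"
    using harmonic_dual_pair assms by simp
  moreover from this have "r_FG N n 1 (harmonic_frame N n) (harmonic_dual N n) = real n / real N"
    using r_FG_1_eq_iff assms harmonic_diag by blast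
  ultimately show "real n / real N \<in> {r_FG N n 1 F G |F G. dual_pair N n F G}" by force
qed (use r_FG_1_ge assms in blast)

lemma R1_iff:
  assumes "0 < n" "n < N"
  shows "(F, G) \<in> R1 N n \<longleftrightarrow> dual_pair N n F G \<and> (\<forall>i<N. hinner (F i) (G i) = of_nat n / of_nat N)"
  unfolding R1_def r1_eq[OF assms] using r_FG_1_eq_iff assms by auto

lemma harmonic_in_R1:
  assumes "0 < n" "n < N"
  shows "(harmonic_frame N n, harmonic_dual N n) \<in> R1 N n"
  using R1_iff[OF assms] harmonic_dual_pair[of n N] harmonic_diag assms by simp

definition off_diagonal :: "nat \<Rightarrow> (nat \<times> nat) set" where
  "off_diagonal N = Sigma {..<N} (\<lambda>i. {..<N} - {i})"

lemma mem_off_diagonal [simp]: "(i, j) \<in> off_diagonal N \<longleftrightarrow> i < N \<and> j < N \<and> i \<noteq> j"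
  by (auto simp: off_diagonal_def)

lemma finite_off_diagonal [simp]: "finite (off_diagonal N)"
  by (simp add: off_diagonal_def)

lemma card_off_diagonal: "card (off_diagonal N) = N * (N - 1)"
  by (simp add: off_diagonal_def card_Diff_singleton)

lemma subsets_m_2: "subsets_m N 2 = (\<lambda>(i, j). {i, j}) ` off_diagonal N"
  unfolding subsets_m_def by (auto simp: card_2_iff image_iff) blast+

definition pair_product_mean :: "nat \<Rightarrow> nat \<Rightarrow> real" where
  "pair_product_mean N n = real n * (real N - real n) / ((real N)\<^sup>2 * (real N - 1))"

lemma pair_product_mean_nonneg: "n < N \<Longrightarrow> 0 \<le> pair_product_mean N n"
  unfolding pair_product_mean_def by (intro divide_nonneg_nonneg mult_nonneg_nonneg) auto

lemma sum_off_diagonal_products: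
  assumes dp: "dual_pair N n F G" and diag: "\<forall>i<N. hinner (F i) (G i) = of_nat n / of_nat N"
    and "0 < n" "n < N"
  shows "(\<Sum>(i, j)\<in>off_diagonal N. hinner (F i) (G j) * hinner (F j) (G i))
     = of_nat (card (off_diagonal N)) * complex_of_real (pair_product_mean N n)"
proof -
  let ?w = "\<lambda>i j. hinner (F i) (G j) * hinner (F j) (G i)"
  let ?d = "of_nat n / of_nat N :: complex"
  have row: "(\<Sum>j\<in>{..<N}-{i}. ?w i j) = ?d - ?d\<^sup>2" if "i < N" for i
  proof -
    have expand: "hinner (F i) (G i) = ?w i i + (\<Sum>j\<in>{..<N}-{i}. ?w i j)"
      using dual_pair_diag_expansion[OF dp that] that by (simp add: sum.remove)
    have di: "hinner (F i) (G i) = ?d" using diag that by blast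
    have "?d = ?d * ?d + (\<Sum>j\<in>{..<N}-{i}. ?w i j)"
      using expand unfolding di .
    thus ?thesis by (metis add_diff_cancel_left' power2_eq_square)
  qed
  have "(\<Sum>(i, j)\<in>off_diagonal N. ?w i j) = (\<Sum>i<N. \<Sum>j\<in>{..<N}-{i}. ?w i j)"
    unfolding off_diagonal_def by (rule sum.Sigma[symmetric]) auto
  also have "\<dots> = of_nat N * (?d - ?d\<^sup>2)" using row by simp
  also have "\<dots> = of_nat (N * (N - 1)) * complex_of_real (pair_product_mean N n)"
  proof -
    have "real N - 1 \<noteq> 0" "real N \<noteq> 0" using assms(3,4) by auto
    hence "real N * (real n / real N - (real n / real N)\<^sup>2) = real (N * (N - 1)) * pair_product_mean N n"
      unfolding pair_product_mean_def using assms(4) by (simp add: of_nat_diff field_simps power2_eq_square)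
    from arg_cong[OF this, of complex_of_real] show ?thesis by simp
  qed
  finally show ?thesis unfolding card_off_diagonal .
qed

lemma cmod_add_csqrt_ge:
  assumes "a \<le> Re u" "0 \<le> a" "0 \<le> r"
  shows "r + sqrt a \<le> cmod (complex_of_real r + csqrt u)"
proof -
  define s where "s = csqrt u"
  have s0: "0 \<le> Re s" unfolding s_def by (rule Re_csqrt)
  have "u = s\<^sup>2" unfolding s_def by simp
  hence "Re u = (Re s)\<^sup>2 - (Im s)\<^sup>2" by (simp add: power2_eq_square)
  hence "a \<le> (Re s)\<^sup>2" using assms(1) by (smt (verit) zero_le_power2)
  hence "sqrt a \<le> Re s" using s0 by (metis real_le_lsqrt)
  moreover have "r + Re s \<le> cmod (complex_of_real r + s)"
    using complex_Re_le_cmod[of "complex_of_real r + s"] by simp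
  ultimately show ?thesis unfolding s_def by linarith
qed

lemma cmod_add_csqrt_le_imp:
  assumes "cmod (complex_of_real r + csqrt u) \<le> r + sqrt a" "0 \<le> a"
  shows "Re u \<le> a" and "Re u = a \<Longrightarrow> u = complex_of_real a"
proof -
  define s where "s = csqrt u"
  have s0: "0 \<le> Re s" unfolding s_def by (rule Re_csqrt)
  have "u = s\<^sup>2" unfolding s_def by simp
  hence Reu: "Re u = (Re s)\<^sup>2 - (Im s)\<^sup>2" and Imu: "Im u = 2 * Re s * Im s"
    by (simp_all add: power2_eq_square)
  have "r + Re s \<le> cmod (complex_of_real r + s)"
    using complex_Re_le_cmod[of "complex_of_real r + s"] by simp
  hence "Re s \<le> sqrt a" using assms(1) unfolding s_def by linarith
  hence Re2: "(Re s)\<^sup>2 \<le> a" using s0 assms(2) by (metis real_sqrt_le_iff real_sqrt_unique sqrt_le_D)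
  show "Re u \<le> a" using Reu Re2 by (smt (verit) zero_le_power2)
  assume "Re u = a"
  hence "(Im s)\<^sup>2 \<le> 0" using Reu Re2 by linarith
  hence "Im u = 0" using Imu by simp
  thus "u = complex_of_real a" using \<open>Re u = a\<close> by (simp add: complex_eq_iff)
qed

lemma cmod_le_if_square_eq:
  assumes "(lam - complex_of_real r)\<^sup>2 = u" "0 \<le> r"
  shows "cmod lam \<le> r + sqrt (cmod u)"
proof -
  have "(cmod (lam - complex_of_real r))\<^sup>2 = cmod u"
    using arg_cong[OF assms(1), of cmod] by (simp add: norm_power)
  hence "cmod (lam - complex_of_real r) = sqrt (cmod u)" by (metis norm_ge_zero real_sqrt_unique)
  moreover have "cmod lam \<le> cmod (complex_of_real r) + cmod (lam - complex_of_real r)"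
    by (metis add.commute diff_add_cancel norm_triangle_ineq)
  ultimately show ?thesis using assms(2) by simp
qed

text \<open>On \<open>\<Lambda> = {i, j}\<close> the reduced matrix is \<open>[c, p; q, c]\<close> with \<open>p = \<langle>g_j, f_i\<rangle>\<close> and
  \<open>q = \<langle>g_i, f_j\<rangle>\<close>, so the nonzero eigenvalues are \<open>c \<plusminus> \<surd>(p q)\<close>.\<close>

locale E_op_pair =
  fixes n :: nat and F G :: "nat \<Rightarrow> complex vec" and i j :: nat and c :: complex
  assumes F_carrier: "\<And>l. l \<in> {i, j} \<Longrightarrow> F l \<in> carrier_vec n"
    and G_carrier: "\<And>l. l \<in> {i, j} \<Longrightarrow> G l \<in> carrier_vec n"
    and distinct: "i \<noteq> j"
    and diag: "hinner (G i) (F i) = c" "hinner (G j) (F j) = c"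
begin

lemma sum_pair: "(\<Sum>l\<in>{i, j}. f l) = (f i + f j :: complex)"
  using distinct by simp

lemma nonzero_spectrum_square:
  assumes "lam \<in> spectrum (E_op n {i, j} F G)" "lam \<noteq> 0"
  shows "(lam - c)\<^sup>2 = hinner (G j) (F i) * hinner (G i) (F j)"
proof -
  obtain v where ev: "eigenvector (E_op n {i, j} F G) v lam"
    using assms(1) unfolding spectrum_def eigenvalue_def by auto
  define x y p q where "x = hinner v (F i)" and "y = hinner v (F j)"
    and "p = hinner (G j) (F i)" and "q = hinner (G i) (F j)"
  have ex: "(lam - c) * x = y * p"
    using E_op_eigenvector_coeffs(1)[OF ev F_carrier G_carrier _ F_carrier[of i]] diag
    unfolding x_def y_def p_def by (simp add: sum_pair algebra_simps)
  have ey: "(lam - c) * y = x * q"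
    using E_op_eigenvector_coeffs(1)[OF ev F_carrier G_carrier _ F_carrier[of j]] diag
    unfolding x_def y_def q_def by (simp add: sum_pair algebra_simps)
  have "x \<noteq> 0 \<or> y \<noteq> 0"
    using E_op_eigenvector_coeffs(2)[OF ev F_carrier G_carrier _ assms(2)] unfolding x_def y_def by auto
  moreover have "(lam - c)\<^sup>2 * x = (p * q) * x"
  proof -
    have "(lam - c)\<^sup>2 * x = (lam - c) * ((lam - c) * x)" by (simp add: power2_eq_square)
    also have "\<dots> = ((lam - c) * y) * p" unfolding ex by simp
    also have "\<dots> = (p * q) * x" unfolding ey by simp
    finally show ?thesis .
  qed
  moreover have "(lam - c)\<^sup>2 * y = (p * q) * y"
  proof -
    have "(lam - c)\<^sup>2 * y = (lam - c) * ((lam - c) * y)" by (simp add: power2_eq_square)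
    also have "\<dots> = ((lam - c) * x) * q" unfolding ey by simp
    also have "\<dots> = (p * q) * y" unfolding ex by simp
    finally show ?thesis .
  qed
  ultimately show ?thesis unfolding p_def q_def by auto
qed

lemma add_csqrt_in_spectrum:
  assumes "c + csqrt (hinner (G j) (F i) * hinner (G i) (F j)) \<noteq> 0"
  shows "c + csqrt (hinner (G j) (F i) * hinner (G i) (F j)) \<in> spectrum (E_op n {i, j} F G)"
proof -
  define p q where "p = hinner (G j) (F i)" and "q = hinner (G i) (F j)"
  define s where "s = csqrt (p * q)"
  have s2: "s * s = p * q" unfolding s_def by (metis power2_csqrt power2_eq_square)
  have l0: "c + s \<noteq> 0" using assms unfolding s_def p_def q_def .
  show ?thesis
  proof (cases "p = 0")
    case False
    have "(\<Sum>m\<in>{i, j}. (if m = i then p else s) * hinner (G m) (F l)) = (c + s) * (if l = i then p else s)"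
      if "l \<in> {i, j}" for l
    proof (cases "l = i")
      case True
      thus ?thesis using distinct diag by (simp add: sum_pair p_def algebra_simps)
    next
      case False
      hence "l = j" using that by simp
      thus ?thesis using distinct diag s2 by (simp add: sum_pair q_def algebra_simps)
    qed
    from E_op_spectrumI[OF F_carrier G_carrier _ l0 this, of i] False
    show ?thesis unfolding s_def p_def q_def by auto
  next
    case True
    hence "s = 0" using s2 by simp
    have "(\<Sum>m\<in>{i, j}. (if m = i then 0 else 1) * hinner (G m) (F l)) = (c + s) * (if l = i then 0 else 1)"
      if "l \<in> {i, j}" for l
      using that distinct diag \<open>s = 0\<close> True unfolding sum_pair p_def by auto
    from E_op_spectrumI[OF F_carrier G_carrier _ l0 this, of j] distinct
    show ?thesis unfolding s_def p_def q_def by auto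
  qed
qed

end

lemma r_FG_2_le_iff:
  assumes "2 \<le> N"
  shows "r_FG N n 2 F G \<le> x \<longleftrightarrow> (\<forall>(i, j)\<in>off_diagonal N. spectral_radius (E_op n {i, j} F G) \<le> x)"
proof -
  have "(0, 1) \<in> off_diagonal N" using assms by simp
  hence "off_diagonal N \<noteq> {}" by blast
  thus ?thesis unfolding r_FG_def subsets_m_2 image_image by (auto simp: Max_le_iff)
qed

lemma spectral_radius_le_r_FG_2:
  assumes "(i, j) \<in> off_diagonal N"
  shows "spectral_radius (E_op n {i, j} F G) \<le> r_FG N n 2 F G"
proof -
  have "2 \<le> N" using assms by auto
  thus ?thesis using r_FG_2_le_iff[of N n F G "r_FG N n 2 F G"] assms by auto
qed

lemma pair_product_cnj:
  assumes "dual_pair N n F G" "i < N" "j < N"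
  shows "hinner (G j) (F i) * hinner (G i) (F j) = cnj (hinner (F i) (G j) * hinner (F j) (G i))"
  using hinner_commute_cnj[of "G j" n "F i"] hinner_commute_cnj[of "G i" n "F j"] dual_pairD[OF assms(1)] assms(2,3)
  by simp

lemma dual_pair_E_op_pair:
  assumes "dual_pair N n F G" "\<forall>l<N. hinner (F l) (G l) = of_nat n / of_nat N" "(i, j) \<in> off_diagonal N"
  shows "E_op_pair n F G i j (of_nat n / of_nat N)"
proof -
  note D = dual_pairD[OF assms(1)]
  have "hinner (G l) (F l) = of_nat n / of_nat N" if "l \<in> {i, j}" for l
    using hinner_commute_cnj[of "G l" n "F l"] D assms(2,3) that by auto
  thus ?thesis using D assms(3) by unfold_locales auto
qed

lemma spectral_radius_pair_ge:
  assumes "dual_pair N n F G" "\<forall>l<N. hinner (F l) (G l) = of_nat n / of_nat N"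
    and "(i, j) \<in> off_diagonal N" "0 < n"
  shows "cmod (of_nat n / of_nat N + csqrt (cnj (hinner (F i) (G j) * hinner (F j) (G i))))
    \<le> spectral_radius (E_op n {i, j} F G)"
proof -
  interpret E_op_pair n F G i j "of_nat n / of_nat N"
    by (rule dual_pair_E_op_pair[OF assms(1-3)])
  let ?pq = "hinner (G j) (F i) * hinner (G i) (F j)"
  define s where "s = csqrt ?pq"
  have "0 \<le> Re s" unfolding s_def by (rule Re_csqrt)
  moreover have "0 < real n / real N" using assms(3,4) by auto
  ultimately have "0 < Re (of_nat n / of_nat N + s)" by simp
  hence "of_nat n / of_nat N + s \<noteq> 0" by (metis less_irrefl zero_complex.sel(1))
  hence "of_nat n / of_nat N + csqrt ?pq \<in> spectrum (E_op n {i, j} F G)"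
    using add_csqrt_in_spectrum unfolding s_def by blast
  moreover have "?pq = cnj (hinner (F i) (G j) * hinner (F j) (G i))"
    using pair_product_cnj assms(1,3) by simp
  ultimately show ?thesis using spectral_radius_mem_max(2)[OF E_op_carrier assms(4)] by auto
qed

lemma spectral_radius_pair_le:
  assumes "dual_pair N n F G" "\<forall>l<N. hinner (F l) (G l) = of_nat n / of_nat N"
    and "(i, j) \<in> off_diagonal N" "0 < n"
  shows "spectral_radius (E_op n {i, j} F G)
    \<le> real n / real N + sqrt (cmod (hinner (F i) (G j) * hinner (F j) (G i)))"
proof -
  interpret E_op_pair n F G i j "of_nat n / of_nat N"
    by (rule dual_pair_E_op_pair[OF assms(1-3)])
  obtain lam where lam: "lam \<in> spectrum (E_op n {i, j} F G)"
    and sr: "spectral_radius (E_op n {i, j} F G) = cmod lam"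
    using spectral_radius_mem_max(1)[OF E_op_carrier assms(4), of "{i, j}" F G] by auto
  show ?thesis
  proof (cases "lam = 0")
    case False
    have "(lam - complex_of_real (real n / real N))\<^sup>2 = hinner (G j) (F i) * hinner (G i) (F j)"
      using nonzero_spectrum_square[OF lam False] by simp
    also have "\<dots> = cnj (hinner (F i) (G j) * hinner (F j) (G i))"
      using pair_product_cnj assms(1,3) by simp
    finally have "cmod lam \<le> real n / real N + sqrt (cmod (cnj (hinner (F i) (G j) * hinner (F j) (G i))))"
      by (rule cmod_le_if_square_eq) simp
    thus ?thesis unfolding sr complex_mod_cnj .
  qed (use sr in simp)
qed

lemma r_FG_2_ge_of_R1:
  assumes "(F, G) \<in> R1 N n" "0 < n" "n < N"
  shows "real n / real N + sqrt (pair_product_mean N n) \<le> r_FG N n 2 F G"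
proof -
  have dp: "dual_pair N n F G" and diag: "\<forall>l<N. hinner (F l) (G l) = of_nat n / of_nat N"
    using R1_iff[OF assms(2,3)] assms(1) by auto
  let ?w = "\<lambda>(i, j). hinner (F i) (G j) * hinner (F j) (G i)"
  have "(\<Sum>ij\<in>off_diagonal N. Re (?w ij)) = of_nat (card (off_diagonal N)) * pair_product_mean N n"
    using arg_cong[OF sum_off_diagonal_products[OF dp diag assms(2,3)], of Re]
    by (simp add: case_prod_unfold)
  moreover have "(0, 1) \<in> off_diagonal N" using assms(2,3) by simp
  ultimately obtain i j where ij: "(i, j) \<in> off_diagonal N" "pair_product_mean N n \<le> Re (?w (i, j))"
    using exists_ge_if_sum_ge[of "off_diagonal N" "pair_product_mean N n" "\<lambda>ij. Re (?w ij)"] by fastforce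
  have "real n / real N + sqrt (pair_product_mean N n)
      \<le> cmod (complex_of_real (real n / real N) + csqrt (cnj (?w (i, j))))"
    using ij(2) pair_product_mean_nonneg[OF assms(3)] by (intro cmod_add_csqrt_ge) auto
  also have "\<dots> \<le> spectral_radius (E_op n {i, j} F G)"
    using spectral_radius_pair_ge[OF dp diag ij(1) assms(2)] by simp
  also have "\<dots> \<le> r_FG N n 2 F G" by (rule spectral_radius_le_r_FG_2[OF ij(1)])
  finally show ?thesis .
qed

lemma uniform2_in_R1:
  assumes "dual_pair N n F G" "uniform2 N F G" "0 < n" "n < N"
  shows "(F, G) \<in> R1 N n"
proof -
  have "uniform1 N F G" using assms(2) unfolding uniform2_def by simp
  hence "\<forall>i<N. hinner (F i) (G i) = of_nat n / of_nat N"
    using uniform1_dual_pair_diag[OF assms(1)] by blast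
  thus ?thesis using R1_iff[OF assms(3,4)] assms(1) by simp
qed

lemma uniform2_off_diagonal_eq:
  assumes "(F, G) \<in> R1 N n" "uniform2 N F G" "0 < n" "n < N" "(i, j) \<in> off_diagonal N"
  shows "hinner (F i) (G j) * hinner (F j) (G i) = complex_of_real (pair_product_mean N n)"
proof -
  let ?w = "\<lambda>(i, j). hinner (F i) (G j) * hinner (F j) (G i)"
  have dp: "dual_pair N n F G" and diag: "\<forall>l<N. hinner (F l) (G l) = of_nat n / of_nat N"
    using R1_iff[OF assms(3,4)] assms(1) by auto
  obtain d where d: "\<forall>i<N. \<forall>j<N. i \<noteq> j \<longrightarrow> hinner (F i) (G j) * hinner (F j) (G i) = d"
    using assms(2) unfolding uniform2_def by blast
  have "?w ij = d" if "ij \<in> off_diagonal N" for ij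
    using d that by (cases ij) simp
  hence "(\<Sum>ij\<in>off_diagonal N. ?w ij) = of_nat (card (off_diagonal N)) * d"
    by simp
  moreover have "card (off_diagonal N) \<noteq> 0"
    using assms(3,4) by (simp add: card_off_diagonal)
  ultimately have "d = complex_of_real (pair_product_mean N n)"
    using sum_off_diagonal_products[OF dp diag assms(3,4)] by simp
  thus ?thesis using d assms(5) by simp
qed

lemma r_FG_2_le_of_R1_uniform2:
  assumes "(F, G) \<in> R1 N n" "uniform2 N F G" "0 < n" "n < N"
  shows "r_FG N n 2 F G \<le> real n / real N + sqrt (pair_product_mean N n)"
proof -
  have dp: "dual_pair N n F G" and diag: "\<forall>l<N. hinner (F l) (G l) = of_nat n / of_nat N"
    using R1_iff[OF assms(3,4)] assms(1) by auto
  have pair: "spectral_radius (E_op n {i, j} F G) \<le> real n / real N + sqrt (pair_product_mean N n)"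
    if "(i, j) \<in> off_diagonal N" for i j
    using spectral_radius_pair_le[OF dp diag that assms(3)] pair_product_mean_nonneg[OF assms(4)]
      uniform2_off_diagonal_eq[OF assms that] by simp
  have "2 \<le> N" using assms(3,4) by simp
  thus ?thesis unfolding r_FG_2_le_iff[OF \<open>2 \<le> N\<close>] using pair by auto
qed

lemma uniform2_if_r_FG_2_eq:
  assumes "(F, G) \<in> R1 N n" "0 < n" "n < N"
    and r: "r_FG N n 2 F G = real n / real N + sqrt (pair_product_mean N n)"
  shows "uniform2 N F G"
proof -
  have dp: "dual_pair N n F G" and diag: "\<forall>l<N. hinner (F l) (G l) = of_nat n / of_nat N"
    using R1_iff[OF assms(2,3)] assms(1) by auto
  let ?w = "\<lambda>(i, j). hinner (F i) (G j) * hinner (F j) (G i)"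
  let ?a = "pair_product_mean N n"
  have bound: "cmod (complex_of_real (real n / real N) + csqrt (cnj (?w ij))) \<le> real n / real N + sqrt ?a"
    if "ij \<in> off_diagonal N" for ij
  proof (cases ij)
    case (Pair i j)
    with that have ij: "(i, j) \<in> off_diagonal N" by simp
    with spectral_radius_pair_ge[OF dp diag ij assms(2)] spectral_radius_le_r_FG_2[OF ij, of n F G]
    show ?thesis unfolding r Pair by simp
  qed
  note bound_imp = cmod_add_csqrt_le_imp[OF bound pair_product_mean_nonneg[OF assms(3)]]
  have "(\<Sum>ij\<in>off_diagonal N. Re (?w ij)) = of_nat (card (off_diagonal N)) * ?a"
    using arg_cong[OF sum_off_diagonal_products[OF dp diag assms(2,3)], of Re]
    by (simp add: case_prod_unfold)
  hence "Re (?w ij) = ?a" if "ij \<in> off_diagonal N" for ij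
    using eq_bound_if_sum_eq[of "off_diagonal N" "\<lambda>ij. Re (?w ij)" ?a ij] bound_imp(1) that by simp
  hence cnj_w: "cnj (?w ij) = complex_of_real ?a" if "ij \<in> off_diagonal N" for ij
    using bound_imp(2) that by simp
  have "cnj (?w (i, j)) = cnj (complex_of_real ?a)" if "i < N" "j < N" "i \<noteq> j" for i j
    using cnj_w[of "(i, j)"] that by simp
  hence "\<forall>i<N. \<forall>j<N. i \<noteq> j \<longrightarrow> ?w (i, j) = complex_of_real ?a"
    by (simp only: complex_cnj_cancel_iff) blast
  thus ?thesis unfolding uniform2_def uniform1_def
    by (intro conjI exI[of _ "of_nat n / of_nat N"] exI[of _ "complex_of_real ?a"]) (use diag in auto)
qed

lemma R1_uniform2_iff:
  assumes "(F, G) \<in> R1 N n" "0 < n" "n < N"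
  shows "uniform2 N F G \<longleftrightarrow> r_FG N n 2 F G = real n / real N + sqrt (pair_product_mean N n)"
proof
  assume "uniform2 N F G"
  thus "r_FG N n 2 F G = real n / real N + sqrt (pair_product_mean N n)"
    using r_FG_2_le_of_R1_uniform2[OF assms(1) _ assms(2,3)] r_FG_2_ge_of_R1[OF assms] by (intro antisym)
qed (rule uniform2_if_r_FG_2_eq[OF assms])

lemma r2_ge:
  assumes "0 < n" "n < N"
  shows "real n / real N + sqrt (pair_product_mean N n) \<le> r2 N n"
  unfolding r2_def using harmonic_in_R1[OF assms] r_FG_2_ge_of_R1[OF _ assms]
  by (intro cInf_greatest) auto

lemma r2_eq_if_uniform2:
  assumes "dual_pair N n F G" "uniform2 N F G" "0 < n" "n < N"
  shows "r2 N n = real n / real N + sqrt (pair_product_mean N n)"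
proof -
  have "(F, G) \<in> R1 N n" using uniform2_in_R1 assms by blast
  moreover from this have "r_FG N n 2 F G = real n / real N + sqrt (pair_product_mean N n)"
    using R1_uniform2_iff assms by blast
  ultimately have "real n / real N + sqrt (pair_product_mean N n) \<in> {r_FG N n 2 F G | F G. (F, G) \<in> R1 N n}"
    by (metis (mono_tags, lifting) mem_Collect_eq)
  thus ?thesis
    unfolding r2_def by (rule cInf_eq_minimum) (use r_FG_2_ge_of_R1[OF _ assms(3,4)] in blast)
qed

lemma R2_iff_uniform2:
  assumes "r2 N n = real n / real N + sqrt (pair_product_mean N n)" "dual_pair N n F G" "0 < n" "n < N"
  shows "(F, G) \<in> R2 N n \<longleftrightarrow> uniform2 N F G"
proof -
  have "(F, G) \<in> R2 N n \<longleftrightarrow> (F, G) \<in> R1 N n \<and> r_FG N n 2 F G = r2 N n"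
    unfolding R2_def by simp
  also have "\<dots> \<longleftrightarrow> uniform2 N F G"
    unfolding assms(1) using uniform2_in_R1[OF assms(2) _ assms(3,4)] R1_uniform2_iff[OF _ assms(3,4)] by blast
  finally show ?thesis .
qed

theorem theorem4p4:
  fixes N n :: nat
  assumes "0 < n" and "N > n"
  shows "r2 N n \<ge> real n / real N + sqrt (real n * (real N - real n) / ((real N)\<^sup>2 * (real N - 1)))
    \<and> ((\<exists>F G. dual_pair N n F G \<and> uniform2 N F G) \<longrightarrow>
         r2 N n = real n / real N + sqrt (real n * (real N - real n) / ((real N)\<^sup>2 * (real N - 1)))
         \<and> (\<forall>F G. dual_pair N n F G \<longrightarrow> ((F, G) \<in> R2 N n \<longleftrightarrow> uniform2 N F G)))"
proof -
  have "r2 N n = real n / real N + sqrt (pair_product_mean N n)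
    \<and> (\<forall>F G. dual_pair N n F G \<longrightarrow> ((F, G) \<in> R2 N n \<longleftrightarrow> uniform2 N F G))"
    if "dual_pair N n F0 G0" "uniform2 N F0 G0" for F0 G0
    using r2_eq_if_uniform2[OF that assms] R2_iff_uniform2[OF r2_eq_if_uniform2[OF that assms] _ assms]
    by blast
  with r2_ge[OF assms] show ?thesis unfolding pair_product_mean_def by blast
qed

end
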